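(* Let $G$ be a connected graph with $\lambda(G)=\sigma(G)=k\geq 1$. Then there exist vertex-disjoint connected graphs $G_1,G_2$ and a set $K$ of $k$ edges, each joining a vertex of $G_1$ to a vertex of $G_2$, such that $G=G_1\ast_K G_2$, and each $G_i$ satisfies exactly one of: (i) $G_i$ has one vertex and no edges; (ii) $k\leq\sigma(G_i)<\lambda(G_i)$; (iii) $k<\sigma(G_i)=\lambda(G_i)$; (iv) $\sigma(G_i)=\lambda(G_i)=k$.
   Context: Graphs may have multiple edges. $\lambda(H)$ is the edge connectivity of $H$ and $\sigma(H)$ the maximum number of pairwise edge-disjoint spanning trees of $H$. For vertex-disjoint graphs $G_1=(V_1,E_1)$, $G_2=(V_2,E_2)$ and a set $K$ of edges each with one end in $V_1$ and one in $V_2$, the $K$-join $G_1\ast_K G_2$ has vertex set $V_1\cup V_2$ and edge set $E_1\cup E_2\cup K$. *)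

theory Defs
  imports Main
begin

text \<open>Loopless multigraphs: a graph is a pair (V, E) of a vertex set and an edge set,
  together with an endpoint map ends :: 'e => 'v set shared by all graphs considered
  (so parallel edges are distinct elements of E with equal ends).\<close>

definition mgraph :: "('e \<Rightarrow> 'v set) \<Rightarrow> 'v set \<Rightarrow> 'e set \<Rightarrow> bool" where
  "mgraph ends V E \<longleftrightarrow> finite V \<and> finite E \<and>
     (\<forall>e\<in>E. ends e \<subseteq> V \<and> card (ends e) = 2)"

definition adj_rel :: "('e \<Rightarrow> 'v set) \<Rightarrow> 'e set \<Rightarrow> ('v \<times> 'v) set" where
  "adj_rel ends E = {(u, v). \<exists>e\<in>E. ends e = {u, v}}"

definition mconnected :: "('e \<Rightarrow> 'v set) \<Rightarrow> 'v set \<Rightarrow> 'e set \<Rightarrow> bool" where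
  "mconnected ends V E \<longleftrightarrow> V \<noteq> {} \<and>
     (\<forall>u\<in>V. \<forall>v\<in>V. (u, v) \<in> (adj_rel ends E)\<^sup>*)"

definition edge_conn :: "('e \<Rightarrow> 'v set) \<Rightarrow> 'v set \<Rightarrow> 'e set \<Rightarrow> nat" where
  "edge_conn ends V E =
     (if card V \<le> 1 then 0
      else (LEAST k. \<exists>F. F \<subseteq> E \<and> card F = k \<and> \<not> mconnected ends V (E - F)))"

definition spanning_tree :: "('e \<Rightarrow> 'v set) \<Rightarrow> 'v set \<Rightarrow> 'e set \<Rightarrow> 'e set \<Rightarrow> bool" where
  "spanning_tree ends V E T \<longleftrightarrow> T \<subseteq> E \<and> mconnected ends V T \<and>
     (\<forall>e\<in>T. \<not> mconnected ends V (T - {e}))"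

definition tree_pack :: "('e \<Rightarrow> 'v set) \<Rightarrow> 'v set \<Rightarrow> 'e set \<Rightarrow> nat" where
  "tree_pack ends V E =
     (GREATEST k. \<exists>T :: nat \<Rightarrow> 'e set.
        (\<forall>i<k. spanning_tree ends V E (T i)) \<and>
        (\<forall>i<k. \<forall>j<k. i \<noteq> j \<longrightarrow> T i \<inter> T j = {}))"

definition is_join :: "('e \<Rightarrow> 'v set) \<Rightarrow> 'v set \<Rightarrow> 'e set \<Rightarrow> 'v set \<Rightarrow> 'e set
     \<Rightarrow> 'v set \<Rightarrow> 'e set \<Rightarrow> 'e set \<Rightarrow> bool" where
  "is_join ends V E V1 E1 V2 E2 K \<longleftrightarrow>
     V1 \<inter> V2 = {} \<and>
     (\<forall>e\<in>K. \<exists>x\<in>V1. \<exists>y\<in>V2. ends e = {x, y}) \<and>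
     V = V1 \<union> V2 \<and> E = E1 \<union> E2 \<union> K"

end

theory Submission
  imports Defs
begin

(* Let G = (V, E) with lambda(G) = sigma(G) = k >= 1.  A minimum edge cut of G
   can be taken to be the set K of all edges leaving some vertex set S with
   {} <> S <> V; then |K| = k.  Fix k pairwise edge-disjoint spanning trees T_1..T_k.
   Each T_j must contain an edge of K (otherwise it would survive deleting K), and the
   T_j are disjoint while |K| = k, so every T_j crosses K exactly once.  A connected
   spanning subgraph crossing the boundary of a vertex set W at most once induces a
   connected subgraph on W; pruning these restrictions to spanning trees gives k
   edge-disjoint spanning trees of G[S] and of G[V - S].  Hence each side is connected
   and either is a single vertex or satisfies k <= sigma <= lambda, which is exactly
   the disjunction (ii)-(iv).  Since G is the K-join of G[S] and G[V - S], the theorem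
   follows. *)

section \<open>Reachability and edge cuts\<close>

lemma adj_rel_mono: "E \<subseteq> E' \<Longrightarrow> adj_rel ends E \<subseteq> adj_rel ends E'"
  unfolding adj_rel_def by auto

lemma mconnected_mono: "mconnected ends V E \<Longrightarrow> E \<subseteq> E' \<Longrightarrow> mconnected ends V E'"
  unfolding mconnected_def using rtrancl_mono[OF adj_rel_mono] by blast

lemma reach_closed:
  assumes "(s, t) \<in> (adj_rel ends T)\<^sup>*" "s \<in> S"
    and closed: "\<And>e a b. e \<in> T \<Longrightarrow> ends e = {a, b} \<Longrightarrow> a \<in> S \<Longrightarrow> b \<in> S"
  shows "t \<in> S"
  using assms(1,2)
proof (induction rule: rtrancl_induct)
  case (step y z)
  then obtain e where "e \<in> T" "ends e = {y, z}" unfolding adj_rel_def by auto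
  with step closed show ?case by blast
qed

lemma reach_leaves:
  assumes "(s, t) \<in> (adj_rel ends T)\<^sup>*" "s \<in> S" "t \<notin> S"
  shows "\<exists>e\<in>T. \<exists>a b. ends e = {a, b} \<and> a \<in> S \<and> b \<notin> S"
  using reach_closed[of s t ends T S] assms by blast

lemma mconnected_edges_nonempty:
  assumes "mconnected ends V T" "card V \<ge> 2"
  shows "T \<noteq> {}"
proof
  assume "T = {}"
  have "finite V" "\<not> card V \<le> Suc 0" using assms(2) by (auto intro: card_ge_0_finite)
  then obtain u v where "u \<in> V" "v \<in> V" "u \<noteq> v" using card_le_Suc0_iff_eq by blast
  with assms(1) \<open>T = {}\<close> have "(u, v) \<in> (adj_rel ends {})\<^sup>*"
    unfolding mconnected_def by blast
  with \<open>u \<noteq> v\<close> show False unfolding adj_rel_def by simp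
qed

definition edge_cut :: "('e \<Rightarrow> 'v set) \<Rightarrow> 'e set \<Rightarrow> 'v set \<Rightarrow> 'e set" where
  "edge_cut ends E S = {e\<in>E. ends e \<inter> S \<noteq> {} \<and> ends e - S \<noteq> {}}"

definition induced_edges :: "('e \<Rightarrow> 'v set) \<Rightarrow> 'e set \<Rightarrow> 'v set \<Rightarrow> 'e set" where
  "induced_edges ends E W = {e\<in>E. ends e \<subseteq> W}"

lemma two_element_set:
  assumes "card A = 2" "a \<in> A" "b \<in> A" "a \<noteq> b"
  shows "A = {a, b}"
  using assms by (auto simp: card_2_iff)

lemma edge_cut_ends:
  assumes "mgraph ends V E" "e \<in> edge_cut ends E S"
  obtains a b where "a \<in> S" "b \<in> V - S" "ends e = {a, b}"
proof -
  from assms(2) obtain a b where e: "e \<in> E" "a \<in> ends e" "a \<in> S" "b \<in> ends e" "b \<notin> S"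
    unfolding edge_cut_def by blast
  with assms(1) have "ends e \<subseteq> V" "card (ends e) = 2" unfolding mgraph_def by auto
  with e two_element_set[of "ends e" a b] show ?thesis using that by blast
qed

lemma edge_cut_complement:
  assumes "mgraph ends V E" "F \<subseteq> E"
  shows "edge_cut ends F (V - S) = edge_cut ends F S"
  using assms unfolding mgraph_def edge_cut_def by blast

lemma edge_cut_disconnects:
  assumes "S \<subseteq> V" "s \<in> S" "t \<in> V" "t \<notin> S"
  shows "\<not> mconnected ends V (E - edge_cut ends E S)"
proof
  assume "mconnected ends V (E - edge_cut ends E S)"
  with assms have "(s, t) \<in> (adj_rel ends (E - edge_cut ends E S))\<^sup>*"
    unfolding mconnected_def by blast
  then have "t \<in> S" using assms(2) by (rule reach_closed) (auto simp: edge_cut_def)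
  with assms(4) show False by simp
qed

lemma induced_join:
  assumes "mgraph ends V E" "S \<subseteq> V"
  shows "is_join ends V E S (induced_edges ends E S) (V - S) (induced_edges ends E (V - S))
           (edge_cut ends E S)"
proof -
  have "E = induced_edges ends E S \<union> induced_edges ends E (V - S) \<union> edge_cut ends E S"
    using assms(1) unfolding mgraph_def induced_edges_def edge_cut_def by blast
  moreover have "\<forall>e\<in>edge_cut ends E S. \<exists>x\<in>S. \<exists>y\<in>V - S. ends e = {x, y}"
    using edge_cut_ends[OF assms(1)] by metis
  ultimately show ?thesis using assms(2) unfolding is_join_def by blast
qed

lemma induced_mgraph:
  assumes "mgraph ends V E" "W \<subseteq> V"
  shows "mgraph ends W (induced_edges ends E W)"
  using assms finite_subset unfolding mgraph_def induced_edges_def by auto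

section \<open>Edge connectivity and spanning-tree packings\<close>

lemma edge_conn_le:
  assumes "card V \<ge> 2" "F \<subseteq> E" "\<not> mconnected ends V (E - F)"
  shows "edge_conn ends V E \<le> card F"
  unfolding edge_conn_def using assms by (auto intro!: Least_le)

lemma edge_conn_witness:
  assumes "card V \<ge> 2"
  obtains F where "F \<subseteq> E" "card F = edge_conn ends V E" "\<not> mconnected ends V (E - F)"
proof -
  let ?P = "\<lambda>k. \<exists>F. F \<subseteq> E \<and> card F = k \<and> \<not> mconnected ends V (E - F)"
  have "?P (card E)"
    using mconnected_edges_nonempty[OF _ assms, of ends "E - E"] by auto
  from LeastI[of ?P, OF this] obtain F
    where F: "F \<subseteq> E" "card F = (LEAST k. ?P k)" "\<not> mconnected ends V (E - F)"
    by blast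
  have "edge_conn ends V E = (LEAST k. ?P k)"
    unfolding edge_conn_def using assms by simp
  with F show ?thesis using that by simp
qed

text \<open>Some minimum edge cut is the full boundary of a proper nonempty vertex set: take
  the component of a vertex after deleting a minimum disconnecting set \<open>F\<close>; its
  boundary lies in \<open>F\<close> and still disconnects.\<close>
lemma min_cut_boundary:
  assumes "mgraph ends V E" "mconnected ends V E" "card V \<ge> 2"
  obtains S where "S \<subseteq> V" "S \<noteq> {}" "V - S \<noteq> {}"
    "card (edge_cut ends E S) = edge_conn ends V E"
proof -
  obtain F where F: "F \<subseteq> E" "card F = edge_conn ends V E" "\<not> mconnected ends V (E - F)"
    using edge_conn_witness[OF assms(3)] by blast
  have "V \<noteq> {}" using assms(2) unfolding mconnected_def by simp
  with F(3) obtain u v where uv: "u \<in> V" "v \<in> V" "(u, v) \<notin> (adj_rel ends (E - F))\<^sup>*"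
    unfolding mconnected_def by blast
  define S where "S = {x\<in>V. (u, x) \<in> (adj_rel ends (E - F))\<^sup>*}"
  have S: "S \<subseteq> V" "u \<in> S" "v \<in> V - S" using uv unfolding S_def by auto
  have "edge_cut ends E S \<subseteq> F"
  proof
    fix e assume e: "e \<in> edge_cut ends E S"
    then obtain a b where ab: "a \<in> S" "b \<in> V - S" "ends e = {a, b}"
      using edge_cut_ends[OF assms(1)] by blast
    show "e \<in> F"
    proof (rule ccontr)
      assume "e \<notin> F"
      with e ab have "(a, b) \<in> adj_rel ends (E - F)"
        unfolding adj_rel_def edge_cut_def by blast
      with ab(1,2) have "b \<in> S" unfolding S_def by (auto intro: rtrancl_into_rtrancl)
      with ab(2) show False by blast
    qed
  qed
  moreover have "finite F" using F(1) assms(1) finite_subset unfolding mgraph_def by blast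
  moreover have "edge_conn ends V E \<le> card (edge_cut ends E S)"
    by (rule edge_conn_le[OF assms(3) _ edge_cut_disconnects[of S V u v]])
       (use S in \<open>auto simp: edge_cut_def\<close>)
  ultimately have "card (edge_cut ends E S) = edge_conn ends V E"
    using card_mono[of F "edge_cut ends E S"] F(2) by linarith
  with S show ?thesis using that by blast
qed

definition tree_family :: "('e \<Rightarrow> 'v set) \<Rightarrow> 'v set \<Rightarrow> 'e set \<Rightarrow> nat \<Rightarrow> (nat \<Rightarrow> 'e set) \<Rightarrow> bool"
  where "tree_family ends V E m T \<longleftrightarrow> (\<forall>i<m. spanning_tree ends V E (T i)) \<and>
        (\<forall>i<m. \<forall>j<m. i \<noteq> j \<longrightarrow> T i \<inter> T j = {})"

text \<open>Pigeonhole: if \<open>m\<close> pairwise disjoint sets each meet a finite set \<open>K\<close>, then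
  they select \<open>m\<close> distinct elements of \<open>K\<close>.\<close>
lemma disjoint_meeting_le_card:
  assumes "finite K" "\<forall>i<m. A i \<inter> K \<noteq> {}"
    "\<forall>i<m. \<forall>j<m. i \<noteq> j \<longrightarrow> A i \<inter> A j = {}"
  shows "m \<le> card K"
proof -
  define f where "f i = (SOME e. e \<in> A i \<inter> K)" for i
  have f: "\<forall>i<m. f i \<in> A i \<inter> K" using assms(2) unfolding f_def by (metis some_in_eq)
  have "inj_on f {..<m}"
    by (rule inj_onI) (use f assms(3) in \<open>metis IntI IntD1 empty_iff lessThan_iff\<close>)
  moreover have "f ` {..<m} \<subseteq> K" using f by auto
  ultimately show ?thesis using card_inj_on_le[OF _ _ assms(1)] by fastforce
qed

text \<open>Spanning trees of a graph with at least two vertices are nonempty, so a tree family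
  has at most \<open>|E|\<close> members.\<close>
lemma tree_family_bound:
  assumes "mgraph ends V E" "card V \<ge> 2" "tree_family ends V E m T"
  shows "m \<le> card E"
proof (rule disjoint_meeting_le_card)
  show "finite E" using assms(1) unfolding mgraph_def by simp
  show "\<forall>i<m. T i \<inter> E \<noteq> {}"
    using assms(3) mconnected_edges_nonempty[OF _ assms(2)]
    unfolding tree_family_def spanning_tree_def by (metis inf.absorb1)
  show "\<forall>i<m. \<forall>j<m. i \<noteq> j \<longrightarrow> T i \<inter> T j = {}"
    using assms(3) unfolding tree_family_def by blast
qed

text \<open>\<open>sigma\<close> is the greatest size of a tree family; by the bound above it is attained,
  and it dominates the size of every tree family.\<close>
lemma tree_pack_greatest: "tree_pack ends V E = (GREATEST m. \<exists>T. tree_family ends V E m T)"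
  unfolding tree_pack_def tree_family_def by simp

lemma tree_pack_attained:
  assumes "mgraph ends V E" "card V \<ge> 2"
  shows "\<exists>T. tree_family ends V E (tree_pack ends V E) T"
  unfolding tree_pack_greatest
  by (rule GreatestI_nat[where k=0 and b="card E"])
     (auto simp: tree_family_def intro: tree_family_bound[OF assms])

lemma tree_pack_ge:
  assumes "mgraph ends V E" "card V \<ge> 2" "tree_family ends V E m T"
  shows "m \<le> tree_pack ends V E"
  unfolding tree_pack_greatest
  by (rule Greatest_le_nat[where b="card E"])
     (use assms tree_family_bound[OF assms(1,2)] in blast)+

text \<open>The easy half of Nash-Williams/Tutte: every disconnecting edge set meets every
  spanning tree, so \<open>sigma \<le> lambda\<close>.\<close>
lemma tree_pack_le_edge_conn:
  assumes "mgraph ends V E" "card V \<ge> 2"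
  shows "tree_pack ends V E \<le> edge_conn ends V E"
proof -
  obtain T where T: "tree_family ends V E (tree_pack ends V E) T"
    using tree_pack_attained[OF assms] by blast
  obtain F where F: "F \<subseteq> E" "card F = edge_conn ends V E" "\<not> mconnected ends V (E - F)"
    using edge_conn_witness[OF assms(2)] by blast
  have meet: "\<forall>i<tree_pack ends V E. T i \<inter> F \<noteq> {}"
  proof (intro allI impI)
    fix i assume "i < tree_pack ends V E"
    then have "T i \<subseteq> E" "mconnected ends V (T i)"
      using T unfolding tree_family_def spanning_tree_def by auto
    then show "T i \<inter> F \<noteq> {}" using F(3) mconnected_mono[of ends V "T i" "E - F"] by blast
  qed
  have "finite F" using assms(1) F(1) finite_subset unfolding mgraph_def by blast
  then have "tree_pack ends V E \<le> card F"
    by (rule disjoint_meeting_le_card[OF _ meet]) (use T in \<open>simp add: tree_family_def\<close>)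
  with F(2) show ?thesis by simp
qed

section \<open>Restricting spanning trees to one side of a cut\<close>

lemma spanning_tree_exists:
  assumes "finite T" "mconnected ends W T"
  shows "\<exists>T'. spanning_tree ends W T T'"
  using assms
proof (induction "card T" arbitrary: T rule: less_induct)
  case less
  show ?case
  proof (cases "\<forall>e\<in>T. \<not> mconnected ends W (T - {e})")
    case True then show ?thesis using less(3) unfolding spanning_tree_def by blast
  next
    case False
    then obtain e where e: "e \<in> T" "mconnected ends W (T - {e})" by blast
    have "card (T - {e}) < card T" using e less(2) by (meson card_Diff1_less)
    with less e obtain T' where "spanning_tree ends W (T - {e}) T'" by blast
    then show ?thesis unfolding spanning_tree_def by blast
  qed
qed

lemma induced_component_closed:
  assumes "A = {y\<in>W. (w, y) \<in> (adj_rel ends (induced_edges ends T W))\<^sup>*}"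
    "e \<in> T" "ends e = {a, b}" "a \<in> W" "b \<in> W"
  shows "a \<in> A \<longleftrightarrow> b \<in> A"
proof -
  have "e \<in> induced_edges ends T W" using assms(2-5) unfolding induced_edges_def by auto
  then have "(a, b) \<in> adj_rel ends (induced_edges ends T W)"
    "(b, a) \<in> adj_rel ends (induced_edges ends T W)"
    using assms(3) unfolding adj_rel_def by (auto simp: insert_commute)
  with assms(1,4,5) show ?thesis by (auto intro: rtrancl_into_rtrancl)
qed

text \<open>A connected spanning subgraph whose edges cross the boundary of \<open>W\<close> at most
  once induces a connected subgraph on \<open>W\<close>: a component \<open>A\<close> of the induced
  subgraph missing some vertex of \<open>W\<close> would need two distinct boundary edges, one
  to leave \<open>A\<close> and one to leave \<open>W - A\<close>.\<close>
lemma induced_connected_single_crossing: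
  assumes "mconnected ends V T" "W \<subseteq> V" "W \<noteq> {}" "finite T"
    "card (edge_cut ends T W) \<le> 1"
  shows "mconnected ends W (induced_edges ends T W)"
proof (rule ccontr)
  let ?R = "adj_rel ends (induced_edges ends T W)"
  assume "\<not> mconnected ends W (induced_edges ends T W)"
  then obtain w x where wx: "w \<in> W" "x \<in> W" "(w, x) \<notin> ?R\<^sup>*"
    using assms(3) unfolding mconnected_def by blast
  define A where "A = {y\<in>W. (w, y) \<in> ?R\<^sup>*}"
  have A: "w \<in> A" "x \<in> W - A" "A \<subseteq> W" using wx unfolding A_def by auto
  have closed: "\<And>e a b. e \<in> T \<Longrightarrow> ends e = {a, b} \<Longrightarrow> a \<in> W \<Longrightarrow> b \<in> W \<Longrightarrow> a \<in> A \<longleftrightarrow> b \<in> A"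
    using induced_component_closed[OF A_def] by blast
  have "(w, x) \<in> (adj_rel ends T)\<^sup>*" "(x, w) \<in> (adj_rel ends T)\<^sup>*"
    using assms(1,2) wx unfolding mconnected_def by auto
  then obtain e a b e' a' b' where
    e: "e \<in> T" "ends e = {a, b}" "a \<in> A" "b \<notin> A" and
    e': "e' \<in> T" "ends e' = {a', b'}" "a' \<in> W - A" "b' \<notin> W - A"
    using reach_leaves[of w x ends T A] reach_leaves[of x w ends T "W - A"] A by blast
  have "b \<notin> W" "b' \<notin> W" using closed e e' A(3) by blast+
  then have "e \<in> edge_cut ends T W" "e' \<in> edge_cut ends T W"
    using e e' A(3) unfolding edge_cut_def by auto
  moreover have "e \<noteq> e'"
  proof
    assume "e = e'"
    then have "a' \<in> {a, b}" using e e' by auto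
    then show False using e' \<open>b \<notin> W\<close> e(3) by auto
  qed
  ultimately have "2 \<le> card (edge_cut ends T W)"
    using card_mono[of "edge_cut ends T W" "{e, e'}"] assms(4)
    by (auto simp: edge_cut_def)
  with assms(5) show False by simp
qed

lemma tree_family_restrict:
  assumes "mgraph ends V E" "tree_family ends V E k T" "W \<subseteq> V" "W \<noteq> {}"
    "\<forall>j<k. card (edge_cut ends (T j) W) \<le> 1"
  shows "\<exists>T'. tree_family ends W (induced_edges ends E W) k T'"
proof -
  have "\<exists>T'. spanning_tree ends W (induced_edges ends (T j) W) T'" if "j < k" for j
  proof (rule spanning_tree_exists)
    have Tj: "T j \<subseteq> E" "mconnected ends V (T j)"
      using assms(2) that unfolding tree_family_def spanning_tree_def by auto
    have "finite E" using assms(1) unfolding mgraph_def by simp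
    with Tj(1) have "finite (T j)" by (rule finite_subset)
    then show "finite (induced_edges ends (T j) W)" unfolding induced_edges_def by simp
    show "mconnected ends W (induced_edges ends (T j) W)"
      by (rule induced_connected_single_crossing[OF Tj(2) assms(3,4) \<open>finite (T j)\<close>])
         (use assms(5) that in blast)
  qed
  then obtain T' where T': "\<forall>j<k. spanning_tree ends W (induced_edges ends (T j) W) (T' j)"
    by metis
  moreover have "T' j \<subseteq> T j \<and> T' j \<subseteq> induced_edges ends E W" if "j < k" for j
  proof -
    have "T' j \<subseteq> induced_edges ends (T j) W" using T' that unfolding spanning_tree_def by blast
    moreover have "T j \<subseteq> E"
      using assms(2) that unfolding tree_family_def spanning_tree_def by blast
    ultimately show ?thesis unfolding induced_edges_def by blast
  qed
  ultimately have "tree_family ends W (induced_edges ends E W) k T'"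
    using assms(2) unfolding tree_family_def spanning_tree_def by blast
  then show ?thesis by blast
qed

definition admissible_side :: "('e \<Rightarrow> 'v set) \<Rightarrow> nat \<Rightarrow> 'v set \<Rightarrow> 'e set \<Rightarrow> bool" where
  "admissible_side ends k W F \<longleftrightarrow> (card W = 1 \<and> F = {}) \<or>
        (card W \<ge> 2 \<and>
          ((k \<le> tree_pack ends W F \<and> tree_pack ends W F < edge_conn ends W F) \<or>
           (k < tree_pack ends W F \<and> tree_pack ends W F = edge_conn ends W F) \<or>
           (tree_pack ends W F = k \<and> edge_conn ends W F = k)))"

lemma admissible_if_tree_family:
  assumes "mgraph ends W F" "W \<noteq> {}" "tree_family ends W F k T"
  shows "admissible_side ends k W F"
proof (cases "card W = 1")
  case True
  have "F = {}"
  proof (rule equals0I)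
    fix e assume "e \<in> F"
    with assms(1) have "ends e \<subseteq> W" "card (ends e) = 2" "finite W"
      unfolding mgraph_def by auto
    then have "2 \<le> card W" using card_mono by metis
    with True show False by simp
  qed
  with True show ?thesis unfolding admissible_side_def by simp
next
  case False
  moreover have "card W \<noteq> 0" using assms(1,2) unfolding mgraph_def by simp
  ultimately have "card W \<ge> 2" by linarith
  with tree_pack_ge[OF assms(1) _ assms(3)] tree_pack_le_edge_conn[OF assms(1)]
  show ?thesis unfolding admissible_side_def by linarith
qed

text \<open>If the boundary \<open>K\<close> of a proper nonempty vertex set has only \<open>k\<close> edges, each
  of \<open>k\<close> disjoint spanning trees crosses it at most once: every tree meets \<open>K\<close>, and two
  crossing edges in one tree would yield \<open>k + 1\<close> disjoint sets meeting \<open>K\<close>.\<close>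
lemma trees_cross_min_cut_once:
  assumes "mgraph ends V E" "tree_family ends V E k T" "S \<subseteq> V" "S \<noteq> {}" "V - S \<noteq> {}"
    "card (edge_cut ends E S) = k" "j < k"
  shows "card (edge_cut ends (T j) S) \<le> 1"
proof -
  let ?K = "edge_cut ends E S"
  have finK: "finite ?K" using assms(1) unfolding mgraph_def edge_cut_def by simp
  have Tj: "\<And>i. i < k \<Longrightarrow> T i \<subseteq> E \<and> mconnected ends V (T i)"
    using assms(2) unfolding tree_family_def spanning_tree_def by blast
  have cut_Tj: "\<And>i. i < k \<Longrightarrow> edge_cut ends (T i) S = T i \<inter> ?K"
    using Tj unfolding edge_cut_def by auto
  have meet: "T i \<inter> ?K \<noteq> {}" if "i < k" for i
  proof
    assume "T i \<inter> ?K = {}"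
    with Tj[OF that] have "mconnected ends V (E - ?K)"
      using mconnected_mono[of ends V "T i" "E - ?K"] by blast
    moreover obtain s t where "s \<in> S" "t \<in> V - S" using assms(4,5) by blast
    ultimately show False using edge_cut_disconnects[OF assms(3), of s t ends E] by blast
  qed
  show ?thesis
  proof (rule ccontr)
    assume "\<not> ?thesis"
    moreover have "finite (T j \<inter> ?K)" using finK by simp
    ultimately obtain e e' where ee': "e \<in> T j \<inter> ?K" "e' \<in> T j \<inter> ?K" "e \<noteq> e'"
      using cut_Tj[OF assms(7)] card_le_Suc0_iff_eq by (metis One_nat_def)
    define A where "A i = (if i = k then {e'} else if i = j then {e} else T i)" for i
    have other_trees: "e \<notin> T i" "e' \<notin> T i" if "i < k" "i \<noteq> j" for i
      using assms(2,7) ee' that unfolding tree_family_def by blast+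
    have "\<forall>i<Suc k. A i \<inter> ?K \<noteq> {}" using meet ee' unfolding A_def by (auto simp: less_Suc_eq)
    moreover have "\<forall>i<Suc k. \<forall>i'<Suc k. i \<noteq> i' \<longrightarrow> A i \<inter> A i' = {}"
      using assms(2) ee'(3) other_trees unfolding A_def tree_family_def by (auto simp: less_Suc_eq)
    ultimately have "Suc k \<le> card ?K" by (rule disjoint_meeting_le_card[OF finK])
    with assms(6) show False by simp
  qed
qed

lemma side_of_cut:
  assumes "mgraph ends V E" "tree_family ends V E k T" "k \<ge> 1" "W \<subseteq> V" "W \<noteq> {}"
    "\<forall>j<k. card (edge_cut ends (T j) W) \<le> 1"
  shows "mgraph ends W (induced_edges ends E W)" "mconnected ends W (induced_edges ends E W)"
    "admissible_side ends k W (induced_edges ends E W)"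
proof -
  show mg: "mgraph ends W (induced_edges ends E W)" by (rule induced_mgraph[OF assms(1,4)])
  obtain T' where T': "tree_family ends W (induced_edges ends E W) k T'"
    using tree_family_restrict[OF assms(1,2,4-6)] by blast
  then have "T' 0 \<subseteq> induced_edges ends E W" "mconnected ends W (T' 0)"
    using assms(3) unfolding tree_family_def spanning_tree_def by auto
  then show "mconnected ends W (induced_edges ends E W)" using mconnected_mono by blast
  show "admissible_side ends k W (induced_edges ends E W)"
    by (rule admissible_if_tree_family[OF mg assms(5) T'])
qed

theorem mainTheorem6:
  fixes ends :: "'e \<Rightarrow> 'v set" and V :: "'v set" and E :: "'e set" and k :: nat
  assumes "mgraph ends V E"
    and "mconnected ends V E"
    and "edge_conn ends V E = k" and "tree_pack ends V E = k" and "k \<ge> 1"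
  shows "\<exists>V1 E1 V2 E2 K.
     mgraph ends V1 E1 \<and> mgraph ends V2 E2 \<and>
     mconnected ends V1 E1 \<and> mconnected ends V2 E2 \<and>
     card K = k \<and> is_join ends V E V1 E1 V2 E2 K \<and>
     (\<forall>(Vi, Ei) \<in> {(V1, E1), (V2, E2)}.
        (card Vi = 1 \<and> Ei = {}) \<or>
        (card Vi \<ge> 2 \<and>
          ((k \<le> tree_pack ends Vi Ei \<and> tree_pack ends Vi Ei < edge_conn ends Vi Ei) \<or>
           (k < tree_pack ends Vi Ei \<and> tree_pack ends Vi Ei = edge_conn ends Vi Ei) \<or>
           (tree_pack ends Vi Ei = k \<and> edge_conn ends Vi Ei = k))))"
proof -
  have cV: "card V \<ge> 2"
    by (cases "card V \<le> 1") (use assms(3,5) in \<open>auto simp: edge_conn_def\<close>)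
  obtain S where S: "S \<subseteq> V" "S \<noteq> {}" "V - S \<noteq> {}" "card (edge_cut ends E S) = k"
    using min_cut_boundary[OF assms(1,2) cV] assms(3) by metis
  obtain T where T: "tree_family ends V E k T"
    using tree_pack_attained[OF assms(1) cV] assms(4) by metis
  have cross_S: "\<forall>j<k. card (edge_cut ends (T j) S) \<le> 1"
    using trees_cross_min_cut_once[OF assms(1) T S] by blast
  moreover have "edge_cut ends (T j) (V - S) = edge_cut ends (T j) S" if "j < k" for j
  proof (rule edge_cut_complement[OF assms(1)])
    show "T j \<subseteq> E" using T that unfolding tree_family_def spanning_tree_def by blast
  qed
  ultimately have cross_rest: "\<forall>j<k. card (edge_cut ends (T j) (V - S)) \<le> 1" by simp
  note side_S = side_of_cut[OF assms(1) T assms(5) S(1,2) cross_S]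
  note side_rest = side_of_cut[OF assms(1) T assms(5) _ S(3) cross_rest]
  show ?thesis
    unfolding admissible_side_def[symmetric]
    using side_S side_rest S(4) induced_join[OF assms(1) S(1)] by blast
qed

end
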